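(* $$\sum _{m=0}^\infty\sum_{n=0}^\infty \frac{\binom{2 m}{m}^2 \binom{2 n}{n}^2 }{ 16^{m + n} (m+n+1) (2 m+3) } = \frac{7 \zeta (3) - 4 G}{\pi ^2}.$$
   Context: $\zeta$ is the Riemann zeta function and $G = \sum_{n\ge 0}\frac{(-1)^n}{(2n+1)^2}$ is Catalan's constant. *)

theory Defs
  imports "HOL-Analysis.Analysis"
begin

definition zeta :: "real \<Rightarrow> real" where
  "zeta s = (\<Sum>n. 1 / (real (Suc n)) powr s)"

definition catalan :: real where
  "catalan = (\<Sum>n. (-1) ^ n / (2 * real n + 1) ^ 2)"

end

theory Submission
  imports Defs
begin

(* Write c n = cbsq n = (binom(2n, n) / 4^n)^2 and A m = c 0 + ... + c m. The inner series
   shift_sum m = sum_n c n / (n + m + 1) and the finite sum weight_sum m, built from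
   binom_ratio m k = binom(2m, m+k) / binom(2m, m), satisfy the same first-order recurrence
   (2m+3)^2 x (m+1) - 4 (m+1)^2 x m = const, whose solution gives
   (2m+1)^2 c m shift_sum m = (4/pi) A m = (4/pi) (2m+1)^2 c m weight_sum m.
   By partial fractions the m-th inner sum is thus (4/pi) (c m weight_sum m / 2 - A m (1/(2m+1) - 1/(2m+3)) / 4).
   Telescoping in m together with Wallis' product gives the column sums sum_m c m weight m k = 4 / (pi (2k+1)^2).
   Interchanging the order of summation therefore turns sum_m c m weight_sum m into
   (4/pi) sum_k 1/(2k+1)^3 = (4/pi) (7/8) zeta 3, and, because sum_k (-1)^k weight m k = 1/(2m+1),
   it turns sum_m A m (1/(2m+1) - 1/(2m+3)) = sum_m c m / (2m+1) into (4/pi) G. *)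

section \<open>Squared central binomial coefficients\<close>

definition cbsq :: "nat \<Rightarrow> real" where
  "cbsq n = (real ((2*n) choose n))^2 / 16^n"

lemma cbsq_0 [simp]: "cbsq 0 = 1"
  by (simp add: cbsq_def)

lemma cbsq_nonneg: "cbsq n \<ge> 0"
  by (simp add: cbsq_def)

lemma Suc_times_central_binomial:
  "Suc n * ((2 * Suc n) choose Suc n) = 2 * (2*n+1) * ((2*n) choose n)"
  by (metis Suc_eq_plus1 Suc_times_binomial Suc_times_binomial_add add_2_eq_Suc
      add_mult_distrib mult_Suc_right nat_mult_1 one_add_one)

lemma cbsq_Suc: "cbsq (Suc n) = cbsq n * (2*real n+1)^2 / (2*real n+2)^2"
proof -
  define b b' where "b = (2*n) choose n" and "b' = (2 * Suc n) choose Suc n"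
  have "real (Suc n * b') = real (2 * (2*n+1) * b)"
    unfolding b_def b'_def Suc_times_central_binomial ..
  then have b': "real b' = 2 * (2*real n+1) * real b / (real n + 1)"
    by (simp add: eq_divide_eq algebra_simps)
  show ?thesis
    unfolding cbsq_def b_def[symmetric] b'_def[symmetric] b'
    by (simp add: divide_simps power2_eq_square) (simp add: algebra_simps)
qed

lemma cbsq_wallis: "cbsq n * (2*real n+1) = 1 / (\<Prod>k=1..n. (4*real k^2) / (4*real k^2 - 1))"
proof (induction n)
  case (Suc n)
  have "(4*(real n+1)^2 - 1) = (2*real n+1)*(2*real n+3)"
    by (simp add: algebra_simps power2_eq_square)
  then have "cbsq (Suc n) * (2 * real (Suc n) + 1)
             = cbsq n * (2*real n+1) / ((4*real (Suc n)^2) / (4*real (Suc n)^2 - 1))"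
    by (simp add: cbsq_Suc divide_simps power2_eq_square) (simp add: algebra_simps)
  also have "\<dots> = 1 / (\<Prod>k=1..Suc n. (4*real k^2) / (4*real k^2 - 1))"
    unfolding Suc.IH by (simp add: prod.nat_ivl_Suc')
  finally show ?case .
qed simp

lemma tendsto_real_times_cbsq: "(\<lambda>n. real n * cbsq n) \<longlonglongrightarrow> 1/pi"
proof -
  have "(\<lambda>n. cbsq n * (2*real n+1)) \<longlonglongrightarrow> 1/(pi/2)"
    unfolding cbsq_wallis by (intro tendsto_divide tendsto_const wallis) auto
  moreover have "(\<lambda>n. real n / (2*real n+1)) \<longlonglongrightarrow> 1/2"
    by real_asymp
  ultimately have "(\<lambda>n. (cbsq n * (2*real n+1)) * (real n / (2*real n+1))) \<longlonglongrightarrow> 1/(pi/2) * (1/2)"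
    by (rule tendsto_mult)
  also have "(\<lambda>n. (cbsq n * (2*real n+1)) * (real n / (2*real n+1))) = (\<lambda>n. real n * cbsq n)"
    by (rule ext) (simp add: field_simps)
  finally show ?thesis by simp
qed

lemma cbsq_recurrence_solution:
  fixes x :: "nat \<Rightarrow> real"
  assumes "x 0 = C" and "\<And>m. (2*real m+3)^2 * x (Suc m) - 4*(real m+1)^2 * x m = C"
  shows "(2*real m+1)^2 * cbsq m * x m = C * (\<Sum>j\<le>m. cbsq j)"
proof (induction m)
  case (Suc m)
  have "(2*real (Suc m)+1)^2 * cbsq (Suc m) * x (Suc m)
        = cbsq (Suc m) * (C + 4*(real m+1)^2 * x m)"
    using assms(2)[of m] by (simp add: algebra_simps)
  also have "\<dots> = C * cbsq (Suc m) + (2*real m+1)^2 * cbsq m * x m"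
    by (simp add: cbsq_Suc divide_simps power2_eq_square) (simp add: algebra_simps)
  also have "\<dots> = C * cbsq (Suc m) + C * (\<Sum>j\<le>m. cbsq j)"
    unfolding Suc.IH ..
  finally show ?case
    by (simp add: algebra_simps)
qed (use assms(1) in simp)

definition binom_ratio :: "nat \<Rightarrow> nat \<Rightarrow> real" where
  "binom_ratio m k = (\<Prod>i<k. (real m - real i) / (real m + real i + 1))"

definition weight :: "nat \<Rightarrow> nat \<Rightarrow> real" where
  "weight m k = binom_ratio m k / (real m + real k + 1)"

lemma binom_ratio_0 [simp]: "binom_ratio m 0 = 1"
  by (simp add: binom_ratio_def)

lemma binom_ratio_Suc [simp]:
  "binom_ratio m (Suc k) = binom_ratio m k * (real m - real k) / (real m + real k + 1)"
  by (simp add: binom_ratio_def)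

lemma binom_ratio_eq_0: "m < k \<Longrightarrow> binom_ratio m k = 0"
  unfolding binom_ratio_def by (rule prod_zero) auto

lemma binom_ratio_nonneg: "binom_ratio m k \<ge> 0"
proof (cases "m < k")
  case False
  then show ?thesis
    unfolding binom_ratio_def by (intro prod_nonneg) auto
qed (simp add: binom_ratio_eq_0)

lemma binom_ratio_Suc_left:
  "binom_ratio m k * (real m + 1)^2 = binom_ratio (Suc m) k * (real m + 1 - real k) * (real m + 1 + real k)"
proof (induction k)
  case (Suc k)
  have "binom_ratio m (Suc k) * (real m + 1)^2
        = binom_ratio (Suc m) k * (real m + 1 - real k) * (real m - real k)"
    using Suc.IH by (simp add: divide_simps)
  then show ?case
    by (simp add: divide_simps) (simp add: algebra_simps)
qed (simp add: power2_eq_square)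

lemma tendsto_binom_ratio: "(\<lambda>m. binom_ratio m k) \<longlonglongrightarrow> 1"
proof -
  have "(\<lambda>m. \<Prod>i<k. (real m - real i) / (real m + real i + 1)) \<longlonglongrightarrow> (\<Prod>i<k. 1)"
    by (intro tendsto_prod) real_asymp
  then show ?thesis
    by (simp add: binom_ratio_def)
qed

lemma weight_eq_0: "m < k \<Longrightarrow> weight m k = 0"
  by (simp add: weight_def binom_ratio_eq_0)

lemma weight_nonneg: "weight m k \<ge> 0"
  by (simp add: weight_def binom_ratio_nonneg)

lemma sum_alternating_weight: "(\<Sum>k<Suc m. (-1)^k * weight m k) = 1 / (2*real m+1)"
proof -
  have telescope: "(2*real m+1) * ((-1)^k * weight m k)
                   = (-1)^k * binom_ratio m k - (-1)^(Suc k) * binom_ratio m (Suc k)" for k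
    by (simp add: weight_def divide_simps) (simp add: algebra_simps)
  have "(2*real m+1) * (\<Sum>k<Suc m. (-1)^k * weight m k) = 1"
    unfolding sum_distrib_left telescope
    by (subst sum_lessThan_telescope') (simp add: binom_ratio_eq_0)
  then show ?thesis
    by (simp add: field_simps)
qed

lemma sums_cbsq_weight: "(\<lambda>m. cbsq m * weight m k) sums (4 / (pi * (2*real k+1)^2))"
proof -
  define g where "g m = 4 / (2*real k+1)^2 * cbsq m * binom_ratio m k * (real m - real k)" for m
  have "g (Suc m) = cbsq m * weight m k * (2*real m+1)^2 / (2*real k+1)^2" for m
    using binom_ratio_Suc_left[of m k]
    by (simp add: g_def weight_def cbsq_Suc divide_simps) (simp add: algebra_simps power2_eq_square)
  then have step: "g (Suc m) - g m = cbsq m * weight m k" for m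
    by (simp add: g_def weight_def divide_simps) (simp add: algebra_simps power2_eq_square)
  have g0: "g 0 = 0"
    by (cases "k = 0") (simp_all add: g_def binom_ratio_eq_0)
  have "(\<lambda>m. 4 / (2*real k+1)^2 * (real m * cbsq m) * binom_ratio m k * (1 - real k / real m))
        \<longlonglongrightarrow> 4 / (2*real k+1)^2 * (1/pi) * 1 * 1"
    by (intro tendsto_mult tendsto_const tendsto_real_times_cbsq tendsto_binom_ratio) real_asymp
  moreover have "\<forall>\<^sub>F m in sequentially.
      4 / (2*real k+1)^2 * (real m * cbsq m) * binom_ratio m k * (1 - real k / real m) = g m"
    using eventually_gt_at_top[of 0] by eventually_elim (simp add: g_def field_simps)
  ultimately have "g \<longlonglongrightarrow> 4 / (2*real k+1)^2 * (1/pi) * 1 * 1"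
    by (rule Lim_transform_eventually)
  from telescope_sums[OF this] show ?thesis
    by (simp add: step g0 mult.commute)
qed

section \<open>Interchanging double series\<close>

lemma sums_swap:
  fixes f :: "nat \<Rightarrow> nat \<Rightarrow> real"
  assumes col_abs: "\<And>k. (\<lambda>m. \<bar>f m k\<bar>) sums G k" and "summable G"
    and col: "\<And>k. (\<lambda>m. f m k) sums F k"
    and row: "\<And>m. (\<lambda>k. f m k) sums R m"
  shows "R sums (\<Sum>k. F k)"
proof -
  have G_has_sum: "((\<lambda>m. \<bar>f m k\<bar>) has_sum G k) UNIV" for k
    using col_abs by (rule sums_nonneg_imp_has_sum) simp
  have "G k \<ge> 0" for k
    using G_has_sum by (rule has_sum_nonneg) simp
  then have "G summable_on UNIV"
    using \<open>summable G\<close> by (intro summable_nonneg_imp_summable_on) auto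
  then have "(\<lambda>(k, m). \<bar>f m k\<bar>) summable_on UNIV \<times> UNIV"
    using G_has_sum by (intro summable_on_SigmaI[where g = G]) auto
  then have "(\<lambda>(k, m). f m k) summable_on UNIV \<times> UNIV"
    by (rule abs_summable_summable[OF summable_on_cong[THEN iffD1, rotated]]) auto
  then obtain S where S: "((\<lambda>(k, m). f m k) has_sum S) (UNIV \<times> UNIV)"
    by (auto simp: summable_on_def)
  have "((\<lambda>m. f m k) has_sum F k) UNIV" for k
    using col_abs[of k] col[of k] by (intro norm_summable_imp_has_sum) (auto simp: sums_iff)
  then have "(F has_sum S) UNIV"
    by (intro has_sum_Sigma'[OF S]) simp
  then have F: "F sums S"
    by (rule has_sum_imp_sums)
  have S': "((\<lambda>(m, k). f m k) has_sum S) (UNIV \<times> UNIV)"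
    using S by (subst has_sum_swap) (simp add: case_prod_unfold)
  have "((\<lambda>k. f m k) has_sum R m) UNIV" for m
  proof -
    have "(\<lambda>k. f m k) summable_on UNIV"
      using summable_on_SigmaD1[of f UNIV "\<lambda>_. UNIV"] S' by (auto dest: has_sum_imp_summable)
    then have "(\<lambda>k. f m k) sums infsum (\<lambda>k. f m k) UNIV"
      by (intro has_sum_imp_sums has_sum_infsum)
    with row[of m] have "R m = infsum (\<lambda>k. f m k) UNIV"
      by (rule sums_unique2)
    with \<open>(\<lambda>k. f m k) summable_on UNIV\<close> show ?thesis
      by (simp add: has_sum_infsum)
  qed
  then have "(R has_sum S) UNIV"
    by (intro has_sum_Sigma'[OF S']) simp
  then have "R sums S"
    by (rule has_sum_imp_sums)
  with F show ?thesis
    by (simp add: sums_iff)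
qed

definition shift_sum :: "nat \<Rightarrow> real" where
  "shift_sum m = (\<Sum>n. cbsq n / (real n + real m + 1))"

lemma sums_shift_sum: "(\<lambda>n. cbsq n / (real n + real m + 1)) sums shift_sum m"
proof -
  have "(\<lambda>n. cbsq n * weight n 0) sums (4 / (pi * (2 * real 0 + 1)^2))"
    by (rule sums_cbsq_weight)
  then have "summable (\<lambda>n. cbsq n / (real n + 1))"
    by (simp add: weight_def sums_iff)
  then have "summable (\<lambda>n. cbsq n / (real n + real m + 1))"
    by (rule summable_comparison_test'[where N = 0])
       (simp add: cbsq_nonneg divide_left_mono)
  then show ?thesis
    by (simp add: shift_sum_def summable_sums)
qed

lemma shift_sum_0: "shift_sum 0 = 4/pi"
  using sums_cbsq_weight[of 0] sums_shift_sum[of 0]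
  by (simp add: weight_def sums_unique2)

lemma shift_sum_recurrence:
  "(2*real m+3)^2 * shift_sum (Suc m) - 4*(real m+1)^2 * shift_sum m = 4/pi"
proof -
  define g where "g n = 4 * (real n)^2 * cbsq n / (real n + real m + 1)" for n
  have step: "g (Suc n) - g n = (2*real m+3)^2 * (cbsq n / (real n + real (Suc m) + 1))
                                - 4*(real m+1)^2 * (cbsq n / (real n + real m + 1))" for n
    by (simp add: g_def cbsq_Suc divide_simps) (simp add: algebra_simps power2_eq_square)
  have "(\<lambda>n. 4 * (real n * cbsq n) * (real n / (real n + real m + 1))) \<longlonglongrightarrow> 4 * (1/pi) * 1"
    by (intro tendsto_mult tendsto_const tendsto_real_times_cbsq) real_asymp
  moreover have "(\<lambda>n. 4 * (real n * cbsq n) * (real n / (real n + real m + 1))) = g"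
    by (simp add: fun_eq_iff g_def power2_eq_square)
  ultimately have "g \<longlonglongrightarrow> 4/pi"
    by simp
  from telescope_sums[OF this] have "(\<lambda>n. g (Suc n) - g n) sums (4/pi)"
    by (simp add: g_def)
  moreover have "(\<lambda>n. g (Suc n) - g n)
      sums ((2*real m+3)^2 * shift_sum (Suc m) - 4*(real m+1)^2 * shift_sum m)"
    unfolding step by (intro sums_diff sums_mult sums_shift_sum)
  ultimately show ?thesis
    by (simp add: sums_unique2)
qed

definition weight_sum :: "nat \<Rightarrow> real" where
  "weight_sum m = (\<Sum>k<Suc m. weight m k / (2*real k+1))"

lemma weight_sum_recurrence:
  "(2*real m+3)^2 * weight_sum (Suc m) - 4*(real m+1)^2 * weight_sum m = 1"
proof -
  have telescope: "(2*real m+3)^2 * (weight (Suc m) k / (2*real k+1))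
                   - 4*(real m+1)^2 * (weight m k / (2*real k+1))
                   = binom_ratio (Suc m) k - binom_ratio (Suc m) (Suc k)" for k
  proof -
    define X where "X = binom_ratio (Suc m) k"
    have "(real m+1)^2 * weight m k = binom_ratio m k * (real m+1)^2 / (real m + real k + 1)"
      by (simp add: weight_def)
    also have "\<dots> = X * (real m + 1 - real k)"
      unfolding binom_ratio_Suc_left X_def by (simp add: divide_simps; simp add: algebra_simps)
    finally have weight_m: "weight m k = X * (real m + 1 - real k) / (real m + 1)^2"
      by (simp add: eq_divide_eq mult.commute)
    show ?thesis
      unfolding weight_m weight_def[of "Suc m"]
      by (simp add: X_def[symmetric] divide_simps) (simp add: algebra_simps power2_eq_square)
  qed
  have weight_sum_m: "weight_sum m = (\<Sum>k<Suc (Suc m). weight m k / (2*real k+1))"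
    by (simp add: weight_sum_def weight_eq_0)
  have "(2*real m+3)^2 * weight_sum (Suc m) - 4*(real m+1)^2 * weight_sum m
        = (\<Sum>k<Suc (Suc m). binom_ratio (Suc m) k - binom_ratio (Suc m) (Suc k))"
    by (simp only: weight_sum_m weight_sum_def[of "Suc m"] sum_distrib_left
        flip: telescope sum_subtractf)
  also have "\<dots> = 1"
    by (subst sum_lessThan_telescope') (simp add: binom_ratio_eq_0)
  finally show ?thesis .
qed

lemma inner_series:
  "(\<lambda>n. (real ((2*m) choose m))^2 * (real ((2*n) choose n))^2
        / (16 ^ (m + n) * (real (m + n) + 1) * (2 * real m + 3)))
   sums (4/pi * (1/2 * (cbsq m * weight_sum m)
                 - 1/4 * ((\<Sum>j\<le>m. cbsq j) * (1/(2*real m+1) - 1/(2*real m+3)))))"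
proof -
  define A where "A = (\<Sum>j\<le>m. cbsq j)"
  have "(2*real m+1)^2 * cbsq m * shift_sum m = 4/pi * A"
    unfolding A_def by (rule cbsq_recurrence_solution) (simp_all add: shift_sum_0 shift_sum_recurrence)
  then have shift: "cbsq m * shift_sum m = 4/pi * (A / (2*real m+1)^2)"
    by (simp add: field_simps)
  have "(2*real m+1)^2 * cbsq m * weight_sum m = A"
    using cbsq_recurrence_solution[of weight_sum 1 m] weight_sum_recurrence
    by (simp add: A_def weight_sum_def weight_def)
  then have weight: "cbsq m * weight_sum m = A / (2*real m+1)^2"
    by (simp add: field_simps)
  have "cbsq m / (2*real m+3) * shift_sum m = 4/pi * (A / (2*real m+1)^2) / (2*real m+3)"
    using shift by simp
  also have "\<dots> = 4/pi * (1/2 * (A / (2*real m+1)^2) - 1/4 * (A * (1/(2*real m+1) - 1/(2*real m+3))))"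
    by (simp add: divide_simps) (simp add: algebra_simps power2_eq_square)
  also have "A / (2*real m+1)^2 = cbsq m * weight_sum m"
    using weight ..
  finally have inner: "cbsq m / (2*real m+3) * shift_sum m
      = 4/pi * (1/2 * (cbsq m * weight_sum m) - 1/4 * (A * (1/(2*real m+1) - 1/(2*real m+3))))" .
  have "(real ((2*m) choose m))^2 * (real ((2*n) choose n))^2
        / (16 ^ (m + n) * (real (m + n) + 1) * (2 * real m + 3))
      = cbsq m / (2*real m+3) * (cbsq n / (real n + real m + 1))" for n
    by (simp add: cbsq_def power_add field_simps)
  moreover have "(\<lambda>n. cbsq m / (2*real m+3) * (cbsq n / (real n + real m + 1)))
                 sums (cbsq m / (2*real m+3) * shift_sum m)"
    by (rule sums_mult[OF sums_shift_sum])
  ultimately show ?thesis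
    unfolding inner A_def by simp
qed

lemma sums_inverse_odd_cube: "(\<lambda>k. 1 / (2*real k+1)^3) sums (7/8 * zeta 3)"
proof -
  define e where "e n = 1 / (real n + 1)^3" for n
  have "summable (\<lambda>n. inverse (real n ^ 3))"
    by (rule inverse_power_summable) simp
  then have "summable e"
    unfolding e_def[abs_def]
    by (subst (asm) summable_Suc_iff[symmetric]) (simp add: inverse_eq_divide add.commute)
  moreover have "zeta 3 = suminf e"
    by (simp add: zeta_def e_def[abs_def] divide_simps add.commute)
  ultimately have e: "e sums zeta 3"
    by (simp add: sums_iff)
  have pair: "sum e {n * 2 ..< n * 2 + 2} = 1/(2*real n+1)^3 + 1/8 * e n" for n
  proof -
    have "{n * 2 ..< n * 2 + 2} = {2*n, Suc (2*n)}"
      by auto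
    then show ?thesis
      by (simp add: e_def divide_simps) (simp add: algebra_simps power3_eq_cube)
  qed
  have "(\<lambda>n. sum e {n * 2 ..< n * 2 + 2} - 1/8 * e n) sums (zeta 3 - 1/8 * zeta 3)"
    by (intro sums_diff sums_group e sums_mult) simp
  then show ?thesis
    unfolding pair by simp
qed

lemma summable_inverse_odd_square: "summable (\<lambda>k. 1 / (2*real k+1)^2)"
proof (rule summable_comparison_test'[where N = 0])
  have "summable (\<lambda>n. inverse (real n ^ 2))"
    by (rule inverse_power_summable) simp
  then show "summable (\<lambda>n. inverse (real (Suc n) ^ 2))"
    by (subst summable_Suc_iff)
  show "norm (1 / (2*real n+1)^2) \<le> inverse (real (Suc n) ^ 2)" for n
    by (simp add: divide_simps power_mono del: of_nat_Suc)
qed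

lemma sums_cbsq_weight_sum: "(\<lambda>m. cbsq m * weight_sum m) sums (4/pi * (7/8 * zeta 3))"
proof -
  have "(\<lambda>m. cbsq m * weight_sum m) sums (\<Sum>k. 4 / (pi * (2*real k+1)^2) / (2*real k+1))"
  proof (rule sums_swap[where f = "\<lambda>m k. cbsq m * weight m k / (2*real k+1)"])
    show "(\<lambda>m. cbsq m * weight m k / (2*real k+1)) sums (4 / (pi * (2*real k+1)^2) / (2*real k+1))" for k
      by (intro sums_divide sums_cbsq_weight)
    then show "(\<lambda>m. \<bar>cbsq m * weight m k / (2*real k+1)\<bar>) sums (4 / (pi * (2*real k+1)^2) / (2*real k+1))" for k
      by (simp add: cbsq_nonneg weight_nonneg)
    show "summable (\<lambda>k. 4 / (pi * (2*real k+1)^2) / (2*real k+1))"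
      using summable_mult[OF sums_summable[OF sums_inverse_odd_cube], of "4/pi"]
      by (simp add: power3_eq_cube power2_eq_square field_simps)
    show "(\<lambda>k. cbsq m * weight m k / (2*real k+1)) sums (cbsq m * weight_sum m)" for m
    proof -
      have "(\<lambda>k. cbsq m * weight m k / (2*real k+1)) sums (\<Sum>k<Suc m. cbsq m * weight m k / (2*real k+1))"
        by (rule sums_finite) (auto simp: weight_eq_0)
      also have "(\<Sum>k<Suc m. cbsq m * weight m k / (2*real k+1)) = cbsq m * weight_sum m"
        unfolding weight_sum_def sum_distrib_left by (rule sum.cong) auto
      finally show ?thesis .
    qed
  qed
  moreover have "(\<lambda>k. 4 / (pi * (2*real k+1)^2) / (2*real k+1)) sums (4/pi * (7/8 * zeta 3))"
    using sums_mult[OF sums_inverse_odd_cube, of "4/pi"] by (simp add: power3_eq_cube power2_eq_square mult.assoc)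
  ultimately show ?thesis
    by (simp add: sums_iff)
qed

lemma sums_cbsq_div_odd: "(\<lambda>m. cbsq m / (2*real m+1)) sums (4/pi * catalan)"
proof -
  have "(\<lambda>m. cbsq m / (2*real m+1)) sums (\<Sum>k. (-1)^k * (4 / (pi * (2*real k+1)^2)))"
  proof (rule sums_swap[where f = "\<lambda>m k. cbsq m * ((-1)^k * weight m k)"])
    show "(\<lambda>m. cbsq m * ((-1)^k * weight m k)) sums ((-1)^k * (4 / (pi * (2*real k+1)^2)))" for k
      using sums_mult[OF sums_cbsq_weight[of k], of "(-1)^k"] by (simp add: algebra_simps)
    show "(\<lambda>m. \<bar>cbsq m * ((-1)^k * weight m k)\<bar>) sums (4 / (pi * (2*real k+1)^2))" for k
      using sums_cbsq_weight[of k] by (simp add: abs_mult cbsq_nonneg weight_nonneg)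
    show "summable (\<lambda>k. 4 / (pi * (2*real k+1)^2))"
      using summable_mult[OF summable_inverse_odd_square, of "4/pi"] by simp
    show "(\<lambda>k. cbsq m * ((-1)^k * weight m k)) sums (cbsq m / (2*real m+1))" for m
    proof -
      have "(\<lambda>k. cbsq m * ((-1)^k * weight m k)) sums (\<Sum>k<Suc m. cbsq m * ((-1)^k * weight m k))"
        by (rule sums_finite) (auto simp: weight_eq_0)
      also have "(\<Sum>k<Suc m. cbsq m * ((-1)^k * weight m k)) = cbsq m / (2*real m+1)"
        unfolding sum_distrib_left[symmetric] sum_alternating_weight by simp
      finally show ?thesis .
    qed
  qed
  moreover have "(\<lambda>k. (-1)^k * (4 / (pi * (2*real k+1)^2))) sums (4/pi * catalan)"
  proof -
    have "summable (\<lambda>n. (-1) ^ n / (2 * real n + 1) ^ 2 :: real)"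
      by (rule summable_comparison_test'[OF summable_inverse_odd_square]) simp
    from sums_mult[OF summable_sums[OF this], of "4/pi"] show ?thesis
      by (simp add: catalan_def mult.commute)
  qed
  ultimately show ?thesis
    by (simp add: sums_iff)
qed

lemma sums_cbsq_partial_sums:
  "(\<lambda>m. (\<Sum>j\<le>m. cbsq j) * (1/(2*real m+1) - 1/(2*real m+3))) sums (4/pi * catalan)"
proof -
  (* Summation by parts: d j m vanishes for m < j and equals 1/(2m+1) - 1/(2m+3) for m \<ge> j,
     while its sum over m telescopes to 1/(2j+1). *)
  define d where "d j m = 1/(2*real (max j m)+1) - 1/(2*real (max j (Suc m))+1)" for j m
  have "(\<lambda>m. (\<Sum>j\<le>m. cbsq j) * (1/(2*real m+1) - 1/(2*real m+3))) sums (\<Sum>j. cbsq j / (2*real j+1))"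
  proof (rule sums_swap[where f = "\<lambda>m j. cbsq j * d j m"])
    fix j
    have "(\<lambda>m. 1/(2*real (max j m)+1)) \<longlonglongrightarrow> 0"
    proof (rule Lim_null_comparison)
      show "\<forall>\<^sub>F m in sequentially. norm (1/(2*real (max j m)+1)) \<le> 1/(2*real m+1)"
        by (intro always_eventually allI) (simp add: divide_simps)
    qed real_asymp
    from telescope_sums'[OF this] have "d j sums (1/(2*real j+1))"
      by (simp add: d_def[abs_def])
    then show "(\<lambda>m. cbsq j * d j m) sums (cbsq j / (2*real j+1))"
      using sums_mult by fastforce
    moreover have "d j m \<ge> 0" for m
      by (simp add: d_def divide_simps)
    ultimately show "(\<lambda>m. \<bar>cbsq j * d j m\<bar>) sums (cbsq j / (2*real j+1))"
      by (simp add: cbsq_nonneg)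
  next
    show "summable (\<lambda>j. cbsq j / (2*real j+1))"
      using sums_cbsq_div_odd by (rule sums_summable)
  next
    fix m
    have "(\<lambda>j. cbsq j * d j m) sums (\<Sum>j<Suc m. cbsq j * d j m)"
      by (rule sums_finite) (auto simp: d_def max_def)
    also have "(\<Sum>j<Suc m. cbsq j * d j m) = (\<Sum>j\<le>m. cbsq j) * (1/(2*real m+1) - 1/(2*real m+3))"
      unfolding sum_distrib_right lessThan_Suc_atMost by (rule sum.cong) (auto simp: d_def max_def)
    finally show "(\<lambda>j. cbsq j * d j m) sums \<dots>" .
  qed
  with sums_cbsq_div_odd show ?thesis
    by (simp add: sums_iff)
qed

theorem mainTheorem12:
  shows "(\<Sum>m. \<Sum>n. (real ((2*m) choose m))^2 * (real ((2*n) choose n))^2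
            / (16 ^ (m + n) * (real (m + n) + 1) * (2 * real m + 3)))
         = (7 * zeta 3 - 4 * catalan) / pi^2"
proof -
  have "(\<lambda>m. \<Sum>n. (real ((2*m) choose m))^2 * (real ((2*n) choose n))^2
            / (16 ^ (m + n) * (real (m + n) + 1) * (2 * real m + 3)))
        sums (4/pi * (1/2 * (4/pi * (7/8 * zeta 3)) - 1/4 * (4/pi * catalan)))"
    unfolding inner_series[THEN sums_unique, symmetric]
    by (intro sums_mult sums_diff sums_cbsq_weight_sum sums_cbsq_partial_sums)
  moreover have "4/pi * (1/2 * (4/pi * (7/8 * zeta 3)) - 1/4 * (4/pi * catalan))
                 = (7 * zeta 3 - 4 * catalan) / pi^2"
    by (simp add: field_simps power2_eq_square)
  ultimately show ?thesis
    by (simp add: sums_iff)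
qed

end
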